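(* An ES combination operator $\nabla$ satisfies (ESF1)–(ESF7) and (ESF8W) if and only if there exists a unique quasifaithful assignment $\Phi\mapsto\succeq_\Phi$ such that $[\![B(\nabla(\Phi,E))]\!]=\max([\![B(E)]\!],\succeq_\Phi)$ for every profile $\Phi$ and every $E\in\mathcal E$.
   Context: Setting: an epistemic space $(\mathcal E,B,\mathcal L_{\mathcal P})$ ($\mathcal E$ nonempty, $B:\mathcal E\to\mathcal L_{\mathcal P}$ with image modulo equivalence exactly the consistent formulas over the finite variable set $\mathcal P$; $\mathcal W_{\mathcal P}$ valuations, $[\![\phi]\!]$ models); agents form a well-ordered set $\mathcal S$; a society is a nonempty finite $N\subseteq\mathcal S$; an $N$-profile is $\Phi:N\to\mathcal E$, $E_i=\Phi(i)$, identified with $E_i$ when $N=\{i\}$; profiles on $\{i_1<\dots<i_n\}$ and $\{j_1<\dots<j_m\}$ are equivalent ($\equiv$) if $n=m$ and entries coincide position-wise; $\Phi\upharpoonright_M$ restriction; partitions $\{N_1,N_2\}$ have nonempty disjoint parts. An ES combination operator maps (profile, $E$) to $\nabla(\Phi,E)\in\mathcal E$. Postulates: (ESF1) $B(\nabla(\Phi,E))\vdash B(E)$; (ESF2) if $\Phi\equiv\Phi'$ and $B(E)\equiv B(E')$ then $B(\nabla(\Phi,E))\equiv B(\nabla(\Phi',E'))$; (ESF3) if $B(E)\equiv B(E')\wedge B(E'')$ then $B(\nabla(\Phi,E'))\wedge B(E'')\vdash B(\nabla(\Phi,E))$; (ESF4) if moreover $B(\nabla(\Phi,E'))\wedge B(E'')\nvdash\bot$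 then $B(\nabla(\Phi,E))\vdash B(\nabla(\Phi,E'))\wedge B(E'')$; (ESF5) if $E_j\ne E_k$ there is $E'$ with $B(\nabla(E_j,E'))\not\equiv B(\nabla(E_k,E'))$; (ESF6) if $\bigwedge_{i\in N}B(E_i)\wedge B(E)\nvdash\bot$ then $B(\nabla(\Phi,E))\equiv\bigwedge_{i\in N}B(E_i)\wedge B(E)$; (ESF7) $B(\nabla(\Phi\upharpoonright_{N_1},E))\wedge B(\nabla(\Phi\upharpoonright_{N_2},E))\vdash B(\nabla(\Phi,E))$; (ESF8W) if $B(\nabla(\Phi\upharpoonright_{N_1},E))\wedge B(\nabla(\Phi\upharpoonright_{N_2},E))\nvdash\bot$ then $B(\nabla(\Phi,E))\vdash B(\nabla(\Phi\upharpoonright_{N_1},E))\vee B(\nabla(\Phi\upharpoonright_{N_2},E))$. An assignment maps each profile to a total preorder $\succeq_\Phi$ on $\mathcal W_{\mathcal P}$; it is basic if $\Phi\equiv\Psi$ implies $\succeq_\Phi=\succeq_\Psi$; it is quasifaithful if basic and: (1) $E_j\ne E_k$ implies $\succeq_{E_j}\ne\succeq_{E_k}$; (2) if $\bigwedge_{i\in N}B(E_i)\nvdash\bot$ then $[\![\bigwedge_{i\in N}B(E_i)]\!]=\max(\succeq_\Phi)$; (3) $w\succeq_{\Phi\upharpoonright_{N_1}}w'$ and $w\succeq_{\Phi\upharpoonright_{N_2}}w'$ imply $w\succeq_\Phi w'$; (4') $w\succ_{\Phi\upharpoonright_{N_1}}w'$ and $w\succ_{\Phi\upharpoonright_{N_2}}w'$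 imply $w\succ_\Phi w'$. $\max(C,\succeq)=\{c\in C:c\succeq x\ \forall x\in C\}$. *)

theory Defs
  imports Main
begin

text \<open>The finite variable set P is modelled by a type 'v of class finite.
 Valuations are sets of variables (those that are true).\<close>

datatype 'v fm = Var 'v | Bot | Neg "'v fm" | Conj "'v fm" "'v fm" | Disj "'v fm" "'v fm"

primrec models :: "'v fm \<Rightarrow> 'v set set" where
  "models (Var p) = {w. p \<in> w}"
| "models Bot = {}"
| "models (Neg f) = - models f"
| "models (Conj f g) = models f \<inter> models g"
| "models (Disj f g) = models f \<union> models g"

definition Top :: "'v fm" where "Top = Neg Bot"

definition entails :: "'v fm \<Rightarrow> 'v fm \<Rightarrow> bool" where
  "entails f g \<longleftrightarrow> models f \<subseteq> models g"

definition fequiv :: "'v fm \<Rightarrow> 'v fm \<Rightarrow> bool" where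
  "fequiv f g \<longleftrightarrow> models f = models g"

definition consistent :: "'v fm \<Rightarrow> bool" where
  "consistent f \<longleftrightarrow> \<not> entails f Bot"

definition epistemic_space :: "('e \<Rightarrow> 'v::finite fm) \<Rightarrow> bool" where
  "epistemic_space B \<longleftrightarrow>
     (\<forall>e. consistent (B e)) \<and> (\<forall>f. consistent f \<longrightarrow> (\<exists>e. fequiv (B e) f))"

text \<open>Agents form the well-ordered type 'a. A profile is a partial map from agents to
 states whose domain (the society) is finite and nonempty.\<close>

definition profile :: "('a \<rightharpoonup> 'e) \<Rightarrow> bool" where
  "profile \<Phi> \<longleftrightarrow> finite (dom \<Phi>) \<and> dom \<Phi> \<noteq> {}"

definition entries :: "('a::linorder \<rightharpoonup> 'e) \<Rightarrow> 'e list" where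
  "entries \<Phi> = map (\<lambda>i. the (\<Phi> i)) (sorted_list_of_set (dom \<Phi>))"

definition prof_equiv :: "('a::linorder \<rightharpoonup> 'e) \<Rightarrow> ('a \<rightharpoonup> 'e) \<Rightarrow> bool" where
  "prof_equiv \<Phi> \<Psi> \<longleftrightarrow> entries \<Phi> = entries \<Psi>"

definition partition2 :: "('a \<rightharpoonup> 'e) \<Rightarrow> 'a set \<Rightarrow> 'a set \<Rightarrow> bool" where
  "partition2 \<Phi> N1 N2 \<longleftrightarrow> N1 \<noteq> {} \<and> N2 \<noteq> {} \<and> N1 \<inter> N2 = {} \<and> N1 \<union> N2 = dom \<Phi>"

definition BigConj :: "('e \<Rightarrow> 'v fm) \<Rightarrow> ('a::linorder \<rightharpoonup> 'e) \<Rightarrow> 'v fm" where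
  "BigConj B \<Phi> = foldr (\<lambda>e f. Conj (B e) f) (entries \<Phi>) Top"

definition ESF_postulates ::
  "('e \<Rightarrow> 'v fm) \<Rightarrow> (('a::linorder \<rightharpoonup> 'e) \<Rightarrow> 'e \<Rightarrow> 'e) \<Rightarrow> bool" where
  "ESF_postulates B nabla \<longleftrightarrow>
    \<comment> \<open>ESF1\<close>
    (\<forall>\<Phi> E. profile \<Phi> \<longrightarrow> entails (B (nabla \<Phi> E)) (B E)) \<and>
    \<comment> \<open>ESF2\<close>
    (\<forall>\<Phi> \<Phi>' E E'. profile \<Phi> \<longrightarrow> profile \<Phi>' \<longrightarrow> prof_equiv \<Phi> \<Phi>' \<longrightarrow> fequiv (B E) (B E') \<longrightarrow>
        fequiv (B (nabla \<Phi> E)) (B (nabla \<Phi>' E'))) \<and>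
    \<comment> \<open>ESF3\<close>
    (\<forall>\<Phi> E E' E''. profile \<Phi> \<longrightarrow> fequiv (B E) (Conj (B E') (B E'')) \<longrightarrow>
        entails (Conj (B (nabla \<Phi> E')) (B E'')) (B (nabla \<Phi> E))) \<and>
    \<comment> \<open>ESF4\<close>
    (\<forall>\<Phi> E E' E''. profile \<Phi> \<longrightarrow> fequiv (B E) (Conj (B E') (B E'')) \<longrightarrow>
        consistent (Conj (B (nabla \<Phi> E')) (B E'')) \<longrightarrow>
        entails (B (nabla \<Phi> E)) (Conj (B (nabla \<Phi> E')) (B E''))) \<and>
    \<comment> \<open>ESF5 (single-agent profiles)\<close>
    (\<forall>j k Ej Ek. Ej \<noteq> Ek \<longrightarrow>
        (\<exists>E'. \<not> fequiv (B (nabla [j \<mapsto> Ej] E')) (B (nabla [k \<mapsto> Ek] E')))) \<and>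
    \<comment> \<open>ESF6\<close>
    (\<forall>\<Phi> E. profile \<Phi> \<longrightarrow> consistent (Conj (BigConj B \<Phi>) (B E)) \<longrightarrow>
        fequiv (B (nabla \<Phi> E)) (Conj (BigConj B \<Phi>) (B E))) \<and>
    \<comment> \<open>ESF7\<close>
    (\<forall>\<Phi> N1 N2 E. profile \<Phi> \<longrightarrow> partition2 \<Phi> N1 N2 \<longrightarrow>
        entails (Conj (B (nabla (\<Phi> |` N1) E)) (B (nabla (\<Phi> |` N2) E))) (B (nabla \<Phi> E))) \<and>
    \<comment> \<open>ESF8W\<close>
    (\<forall>\<Phi> N1 N2 E. profile \<Phi> \<longrightarrow> partition2 \<Phi> N1 N2 \<longrightarrow>
        consistent (Conj (B (nabla (\<Phi> |` N1) E)) (B (nabla (\<Phi> |` N2) E))) \<longrightarrow>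
        entails (B (nabla \<Phi> E)) (Disj (B (nabla (\<Phi> |` N1) E)) (B (nabla (\<Phi> |` N2) E))))"

text \<open>An assignment maps each profile to a relation on valuations ('R \<Phi> w w'' means w \<succeq>_\<Phi> w'').\<close>

definition total_preorder :: "('w \<Rightarrow> 'w \<Rightarrow> bool) \<Rightarrow> bool" where
  "total_preorder r \<longleftrightarrow> (\<forall>x y. r x y \<or> r y x) \<and> (\<forall>x y z. r x y \<longrightarrow> r y z \<longrightarrow> r x z)"

definition maxset :: "'w set \<Rightarrow> ('w \<Rightarrow> 'w \<Rightarrow> bool) \<Rightarrow> 'w set" where
  "maxset C r = {c \<in> C. \<forall>x\<in>C. r c x}"

definition strict :: "('w \<Rightarrow> 'w \<Rightarrow> bool) \<Rightarrow> 'w \<Rightarrow> 'w \<Rightarrow> bool" where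
  "strict r x y \<longleftrightarrow> r x y \<and> \<not> r y x"

definition assignment :: "(('a \<rightharpoonup> 'e) \<Rightarrow> 'v set \<Rightarrow> 'v set \<Rightarrow> bool) \<Rightarrow> bool" where
  "assignment R \<longleftrightarrow> (\<forall>\<Phi>. profile \<Phi> \<longrightarrow> total_preorder (R \<Phi>))"

definition basic_assignment :: "(('a::linorder \<rightharpoonup> 'e) \<Rightarrow> 'v set \<Rightarrow> 'v set \<Rightarrow> bool) \<Rightarrow> bool" where
  "basic_assignment R \<longleftrightarrow> assignment R \<and>
     (\<forall>\<Phi> \<Psi>. profile \<Phi> \<longrightarrow> profile \<Psi> \<longrightarrow> prof_equiv \<Phi> \<Psi> \<longrightarrow> R \<Phi> = R \<Psi>)"

definition quasifaithful ::
  "('e \<Rightarrow> 'v fm) \<Rightarrow> (('a::linorder \<rightharpoonup> 'e) \<Rightarrow> 'v set \<Rightarrow> 'v set \<Rightarrow> bool) \<Rightarrow> bool" where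
  "quasifaithful B R \<longleftrightarrow> basic_assignment R \<and>
    \<comment> \<open>(1)\<close>
    (\<forall>j k Ej Ek. Ej \<noteq> Ek \<longrightarrow> R [j \<mapsto> Ej] \<noteq> R [k \<mapsto> Ek]) \<and>
    \<comment> \<open>(2)\<close>
    (\<forall>\<Phi>. profile \<Phi> \<longrightarrow> consistent (BigConj B \<Phi>) \<longrightarrow>
        models (BigConj B \<Phi>) = maxset UNIV (R \<Phi>)) \<and>
    \<comment> \<open>(3)\<close>
    (\<forall>\<Phi> N1 N2 w w'. profile \<Phi> \<longrightarrow> partition2 \<Phi> N1 N2 \<longrightarrow>
        R (\<Phi> |` N1) w w' \<longrightarrow> R (\<Phi> |` N2) w w' \<longrightarrow> R \<Phi> w w') \<and>
    \<comment> \<open>(4')\<close>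
    (\<forall>\<Phi> N1 N2 w w'. profile \<Phi> \<longrightarrow> partition2 \<Phi> N1 N2 \<longrightarrow>
        strict (R (\<Phi> |` N1)) w w' \<longrightarrow> strict (R (\<Phi> |` N2)) w w' \<longrightarrow> strict (R \<Phi>) w w')"

definition represents ::
  "('e \<Rightarrow> 'v fm) \<Rightarrow> (('a \<rightharpoonup> 'e) \<Rightarrow> 'e \<Rightarrow> 'e) \<Rightarrow> (('a \<rightharpoonup> 'e) \<Rightarrow> 'v set \<Rightarrow> 'v set \<Rightarrow> bool) \<Rightarrow> bool" where
  "represents B nabla R \<longleftrightarrow>
     (\<forall>\<Phi> E. profile \<Phi> \<longrightarrow> models (B (nabla \<Phi> E)) = maxset (models (B E)) (R \<Phi>))"

end

theory Submission
  imports Defs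
begin

text \<open>An operator determines, for each profile \<Phi>, a choice function on nonempty sets S of
 valuations: choose the models of B(\<nabla>(\<Phi>, E)) for a state E with models S. ESF3 and ESF4
 are Sen's contraction and Arrow's expansion conditions, so this choice function is
 rationalised by its revealed preference (w \<succeq> w' iff w is chosen from {w, w'}), which is a
 total preorder; the remaining postulates translate one by one into the conditions of
 quasifaithfulness. Uniqueness holds because a total preorder is determined by its choices
 from two-element sets.\<close>

section \<open>Every nonempty set of valuations is the belief of a state\<close>

lemma consistent_iff_models_nonempty: "consistent f \<longleftrightarrow> models f \<noteq> {}"
  by (auto simp: consistent_def entails_def)

lemma ex_fm_models_agree_on:
  assumes "finite V"
  shows "\<exists>f. models f = {u. u \<inter> V = w \<inter> V}"
  using assms
proof (induction V rule: finite_induct)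
  case empty
  show ?case by (rule exI[of _ Top]) (simp add: Top_def)
next
  case (insert p V)
  then obtain f where f: "models f = {u. u \<inter> V = w \<inter> V}" by blast
  have agree: "{u. u \<inter> insert p V = w \<inter> insert p V} = {u. u \<inter> V = w \<inter> V \<and> (p \<in> u \<longleftrightarrow> p \<in> w)}"
    by blast
  show ?case
  proof (cases "p \<in> w")
    case True
    then have "models (Conj f (Var p)) = {u. u \<inter> insert p V = w \<inter> insert p V}"
      by (auto simp: f agree)
    then show ?thesis by blast
  next
    case False
    then have "models (Conj f (Neg (Var p))) = {u. u \<inter> insert p V = w \<inter> insert p V}"
      by (auto simp: f agree)
    then show ?thesis by blast
  qed
qed

lemma ex_fm_models_eq: "\<exists>f. models (f :: 'v::finite fm) = S"
proof -
  have "finite S" by simp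
  then show ?thesis
  proof (induction S rule: finite_induct)
    case empty
    show ?case by (rule exI[of _ Bot]) simp
  next
    case (insert w S)
    then obtain f where f: "models f = S" by blast
    obtain g where "models (g :: 'v fm) = {u. u \<inter> UNIV = w \<inter> UNIV}"
      using ex_fm_models_agree_on[of UNIV w] by auto
    then have "models g = {w}" by auto
    then show ?case by (intro exI[of _ "Disj g f"]) (simp add: f)
  qed
qed

definition state_of :: "('e \<Rightarrow> 'v fm) \<Rightarrow> 'v set set \<Rightarrow> 'e" where
  "state_of B S = (SOME e. models (B e) = S)"

lemma models_state_of:
  assumes "epistemic_space B" and "S \<noteq> {}"
  shows "models (B (state_of B S)) = (S :: 'v::finite set set)"
proof -
  obtain f where f: "models (f :: 'v fm) = S" using ex_fm_models_eq by blast
  with assms(2) have "consistent f" by (simp add: consistent_iff_models_nonempty)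
  with assms(1) obtain e where "fequiv (B e) f" unfolding epistemic_space_def by blast
  with f have "models (B e) = S" by (simp add: fequiv_def)
  then show ?thesis unfolding state_of_def by (rule someI)
qed

lemma models_nonempty: "epistemic_space B \<Longrightarrow> models (B e) \<noteq> {}"
  by (simp add: epistemic_space_def consistent_iff_models_nonempty)

lemma profile_singleton: "profile [j \<mapsto> e]"
  by (simp add: profile_def)

lemma profile_restrict_partition2:
  "profile \<Phi> \<Longrightarrow> partition2 \<Phi> N1 N2 \<Longrightarrow> profile (\<Phi> |` N1) \<and> profile (\<Phi> |` N2)"
  unfolding profile_def partition2_def by auto

section \<open>Maximal elements of a total preorder\<close>

lemma total_preorder_refl: "total_preorder r \<Longrightarrow> r x x"
  unfolding total_preorder_def by blast

lemma total_preorder_trans: "total_preorder r \<Longrightarrow> r x y \<Longrightarrow> r y z \<Longrightarrow> r x z"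
  unfolding total_preorder_def by blast

lemma maxset_pair_iff: "total_preorder r \<Longrightarrow> w \<in> maxset {w, w'} r \<longleftrightarrow> r w w'"
  unfolding maxset_def using total_preorder_refl[of r w] by auto

lemma total_preorder_eq_iff_maxset_pairs:
  assumes "total_preorder r" and "total_preorder r'"
  shows "r = r' \<longleftrightarrow> (\<forall>w w'. maxset {w, w'} r = maxset {w, w'} r')"
proof
  assume "\<forall>w w'. maxset {w, w'} r = maxset {w, w'} r'"
  then show "r = r'"
    using maxset_pair_iff[OF assms(1)] maxset_pair_iff[OF assms(2)] by (intro ext) metis
qed simp

lemma maxset_inter_subset: "maxset S r \<inter> T \<subseteq> maxset (S \<inter> T) r"
  by (auto simp: maxset_def)

lemma maxset_inter_eq:
  assumes "total_preorder r" and "maxset S r \<inter> T \<noteq> {}"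
  shows "maxset (S \<inter> T) r = maxset S r \<inter> T"
proof
  obtain y where y: "y \<in> maxset S r" "y \<in> T" using assms(2) by blast
  show "maxset (S \<inter> T) r \<subseteq> maxset S r \<inter> T"
  proof
    fix x assume x: "x \<in> maxset (S \<inter> T) r"
    then have "r x y" using y by (auto simp: maxset_def)
    with y(1) have "\<forall>z\<in>S. r x z"
      using total_preorder_trans[OF assms(1)] by (auto simp: maxset_def)
    with x show "x \<in> maxset S r \<inter> T" by (simp add: maxset_def)
  qed
qed (rule maxset_inter_subset)

lemma strict_if_notin_maxset:
  assumes "total_preorder r" and "z \<in> maxset S r" and "x \<in> S" and "x \<notin> maxset S r"
  shows "strict r z x"
proof -
  from assms(3,4) obtain y where "y \<in> S" "\<not> r x y" by (auto simp: maxset_def)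
  moreover have "r z y" "r z x" using assms(2,3) \<open>y \<in> S\<close> by (auto simp: maxset_def)
  ultimately show ?thesis unfolding strict_def using total_preorder_trans[OF assms(1)] by blast
qed

section \<open>Choice functions rationalised by their revealed preference\<close>

definition revealed_pref :: "('w set \<Rightarrow> 'w set) \<Rightarrow> 'w \<Rightarrow> 'w \<Rightarrow> bool" where
  "revealed_pref C w w' \<longleftrightarrow> w \<in> C {w, w'}"

locale choice_function =
  fixes C :: "'w set \<Rightarrow> 'w set"
  assumes choice_subset: "S \<noteq> {} \<Longrightarrow> C S \<subseteq> S"
    and choice_nonempty: "S \<noteq> {} \<Longrightarrow> C S \<noteq> {}"
    and choice_contraction: "S \<subseteq> T \<Longrightarrow> S \<noteq> {} \<Longrightarrow> C T \<inter> S \<subseteq> C S"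
    and choice_expansion: "S \<subseteq> T \<Longrightarrow> S \<noteq> {} \<Longrightarrow> C T \<inter> S \<noteq> {} \<Longrightarrow> C S \<subseteq> C T \<inter> S"
begin

lemma choice_pair_eq:
  assumes "a \<in> C T" and "b \<in> T"
  shows "C {a, b} = C T \<inter> {a, b}"
proof -
  have "T \<noteq> {}" using assms(2) by blast
  with assms have sub: "{a, b} \<subseteq> T" using choice_subset by blast
  have "C T \<inter> {a, b} \<noteq> {}" using assms(1) by blast
  then show ?thesis
    using choice_contraction[OF sub] choice_expansion[OF sub] by blast
qed

lemma revealed_pref_chosen:
  assumes "a \<in> C T" and "b \<in> T"
  shows "revealed_pref C a b"
  using choice_pair_eq[OF assms] assms(1) by (simp add: revealed_pref_def)

lemma chosen_if_revealed_pref: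
  assumes "a \<in> C T" and "b \<in> T" and "revealed_pref C b a"
  shows "b \<in> C T"
proof -
  have "b \<in> C {a, b}" using assms(3) by (simp add: revealed_pref_def insert_commute)
  then show ?thesis using choice_pair_eq[OF assms(1,2)] by blast
qed

lemma revealed_pref_total: "revealed_pref C x y \<or> revealed_pref C y x"
proof -
  have "C {x, y} \<noteq> {}" "C {x, y} \<subseteq> {x, y}"
    using choice_nonempty[of "{x, y}"] choice_subset[of "{x, y}"] by simp_all
  then have "x \<in> C {x, y} \<or> y \<in> C {x, y}" by blast
  then show ?thesis by (auto simp: revealed_pref_def insert_commute)
qed

lemma revealed_pref_trans:
  assumes xy: "revealed_pref C x y" and yz: "revealed_pref C y z"
  shows "revealed_pref C x z"
proof -
  let ?T = "{x, y, z}"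
  have "C ?T \<noteq> {}" "C ?T \<subseteq> ?T" using choice_nonempty choice_subset by simp_all
  then obtain u where u: "u \<in> C ?T" "u \<in> ?T" by blast
  have "z \<in> C ?T \<Longrightarrow> y \<in> C ?T" using chosen_if_revealed_pref[OF _ _ yz] by simp
  moreover have "y \<in> C ?T \<Longrightarrow> x \<in> C ?T" using chosen_if_revealed_pref[OF _ _ xy] by simp
  ultimately have "x \<in> C ?T" using u by blast
  then show ?thesis by (rule revealed_pref_chosen) simp
qed

lemma revealed_pref_total_preorder: "total_preorder (revealed_pref C)"
  unfolding total_preorder_def using revealed_pref_total revealed_pref_trans by blast

lemma choice_eq_maxset:
  assumes "S \<noteq> {}"
  shows "C S = maxset S (revealed_pref C)"
proof
  show "C S \<subseteq> maxset S (revealed_pref C)"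
    using choice_subset[OF assms] revealed_pref_chosen by (auto simp: maxset_def)
  show "maxset S (revealed_pref C) \<subseteq> C S"
  proof
    fix x assume x: "x \<in> maxset S (revealed_pref C)"
    obtain z where z: "z \<in> C S" using choice_nonempty[OF assms] by blast
    then have "z \<in> S" using choice_subset[OF assms] by blast
    with x show "x \<in> C S"
      using chosen_if_revealed_pref[OF z] by (simp add: maxset_def)
  qed
qed

lemma strict_revealed_pref_iff: "strict (revealed_pref C) w w' \<longleftrightarrow> C {w, w'} = {w} \<and> w \<noteq> w'"
proof -
  have ne: "C {w, w'} \<noteq> {}" and sub: "C {w, w'} \<subseteq> {w, w'}"
    using choice_nonempty[of "{w, w'}"] choice_subset[of "{w, w'}"] by simp_all
  have "strict (revealed_pref C) w w' \<longleftrightarrow> w \<in> C {w, w'} \<and> w' \<notin> C {w, w'}"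
    unfolding strict_def revealed_pref_def by (simp add: insert_commute)
  also have "\<dots> \<longleftrightarrow> C {w, w'} = {w} \<and> w \<noteq> w'"
    using ne sub by blast
  finally show ?thesis .
qed

end

section \<open>Represented operators satisfy the postulates\<close>

locale represented_operator =
  fixes B :: "'e \<Rightarrow> 'v::finite fm"
    and nabla :: "('a::linorder \<rightharpoonup> 'e) \<Rightarrow> 'e \<Rightarrow> 'e"
    and R :: "('a \<rightharpoonup> 'e) \<Rightarrow> 'v set \<Rightarrow> 'v set \<Rightarrow> bool"
  assumes epistemic: "epistemic_space B"
    and quasifaithful: "quasifaithful B R"
    and representation: "represents B nabla R"
begin

lemma models_nabla: "profile \<Phi> \<Longrightarrow> models (B (nabla \<Phi> E)) = maxset (models (B E)) (R \<Phi>)"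
  using representation by (simp add: represents_def)

lemma total_preorder_R: "profile \<Phi> \<Longrightarrow> total_preorder (R \<Phi>)"
  using quasifaithful by (simp add: quasifaithful_def basic_assignment_def assignment_def)

lemma ESF1: "profile \<Phi> \<Longrightarrow> entails (B (nabla \<Phi> E)) (B E)"
  by (simp add: models_nabla entails_def maxset_def)

lemma ESF2:
  "profile \<Phi> \<Longrightarrow> profile \<Phi>' \<Longrightarrow> prof_equiv \<Phi> \<Phi>' \<Longrightarrow> fequiv (B E) (B E') \<Longrightarrow>
    fequiv (B (nabla \<Phi> E)) (B (nabla \<Phi>' E'))"
  using quasifaithful by (simp add: models_nabla fequiv_def quasifaithful_def basic_assignment_def)

lemma ESF3:
  "profile \<Phi> \<Longrightarrow> fequiv (B E) (Conj (B E') (B E'')) \<Longrightarrow>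
    entails (Conj (B (nabla \<Phi> E')) (B E'')) (B (nabla \<Phi> E))"
  using maxset_inter_subset by (simp add: models_nabla fequiv_def entails_def)

lemma ESF4:
  "profile \<Phi> \<Longrightarrow> fequiv (B E) (Conj (B E') (B E'')) \<Longrightarrow>
    consistent (Conj (B (nabla \<Phi> E')) (B E'')) \<Longrightarrow>
    entails (B (nabla \<Phi> E)) (Conj (B (nabla \<Phi> E')) (B E''))"
  using maxset_inter_eq[OF total_preorder_R]
  by (simp add: models_nabla fequiv_def entails_def consistent_iff_models_nonempty)

lemma ESF5:
  assumes "Ej \<noteq> Ek"
  shows "\<exists>E'. \<not> fequiv (B (nabla [j \<mapsto> Ej] E')) (B (nabla [k \<mapsto> Ek] E'))"
proof -
  have "R [j \<mapsto> Ej] \<noteq> R [k \<mapsto> Ek]"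
    using assms quasifaithful by (simp add: quasifaithful_def)
  then obtain w w' where "maxset {w, w'} (R [j \<mapsto> Ej]) \<noteq> maxset {w, w'} (R [k \<mapsto> Ek])"
    using total_preorder_eq_iff_maxset_pairs[OF total_preorder_R total_preorder_R, OF profile_singleton profile_singleton]
    by blast
  moreover have "models (B (state_of B {w, w'})) = {w, w'}"
    using models_state_of[OF epistemic] by simp
  ultimately show ?thesis
    by (intro exI[of _ "state_of B {w, w'}"]) (simp add: fequiv_def models_nabla profile_singleton)
qed

lemma ESF6:
  assumes "profile \<Phi>" and "consistent (Conj (BigConj B \<Phi>) (B E))"
  shows "fequiv (B (nabla \<Phi> E)) (Conj (BigConj B \<Phi>) (B E))"
proof -
  have "consistent (BigConj B \<Phi>)"
    using assms(2) by (auto simp: consistent_iff_models_nonempty)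
  then have "models (BigConj B \<Phi>) = maxset UNIV (R \<Phi>)"
    using assms(1) quasifaithful by (simp add: quasifaithful_def)
  with assms show ?thesis
    using maxset_inter_eq[OF total_preorder_R[OF assms(1)], of UNIV "models (B E)"]
    by (simp add: fequiv_def models_nabla consistent_iff_models_nonempty)
qed

lemma ESF7:
  assumes "profile \<Phi>" and "partition2 \<Phi> N1 N2"
  shows "entails (Conj (B (nabla (\<Phi> |` N1) E)) (B (nabla (\<Phi> |` N2) E))) (B (nabla \<Phi> E))"
proof -
  have "R (\<Phi> |` N1) w w' \<Longrightarrow> R (\<Phi> |` N2) w w' \<Longrightarrow> R \<Phi> w w'" for w w'
    using assms quasifaithful by (simp add: quasifaithful_def)
  moreover have "profile (\<Phi> |` N1)" "profile (\<Phi> |` N2)"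
    using profile_restrict_partition2[OF assms] by auto
  ultimately show ?thesis
    using assms(1) by (auto simp: entails_def models_nabla maxset_def)
qed

lemma ESF8W:
  assumes p: "profile \<Phi>" and pt: "partition2 \<Phi> N1 N2"
    and c: "consistent (Conj (B (nabla (\<Phi> |` N1) E)) (B (nabla (\<Phi> |` N2) E)))"
  shows "entails (B (nabla \<Phi> E)) (Disj (B (nabla (\<Phi> |` N1) E)) (B (nabla (\<Phi> |` N2) E)))"
  unfolding entails_def
proof
  let ?S = "models (B E)"
  have p1: "profile (\<Phi> |` N1)" and p2: "profile (\<Phi> |` N2)"
    using profile_restrict_partition2[OF p pt] by auto
  from c obtain z where z1: "z \<in> maxset ?S (R (\<Phi> |` N1))" and z2: "z \<in> maxset ?S (R (\<Phi> |` N2))"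
    by (auto simp: consistent_iff_models_nonempty models_nabla p1 p2)
  fix x assume "x \<in> models (B (nabla \<Phi> E))"
  then have x: "x \<in> maxset ?S (R \<Phi>)" by (simp add: models_nabla p)
  then have "\<not> strict (R \<Phi>) z x" using z1 by (auto simp: maxset_def strict_def)
  then have "\<not> (strict (R (\<Phi> |` N1)) z x \<and> strict (R (\<Phi> |` N2)) z x)"
    using p pt quasifaithful by (auto simp: quasifaithful_def)
  moreover have "x \<in> ?S" using x by (simp add: maxset_def)
  ultimately have "x \<in> maxset ?S (R (\<Phi> |` N1)) \<or> x \<in> maxset ?S (R (\<Phi> |` N2))"
    using strict_if_notin_maxset[OF total_preorder_R[OF p1] z1]
      strict_if_notin_maxset[OF total_preorder_R[OF p2] z2] by blast
  then show "x \<in> models (Disj (B (nabla (\<Phi> |` N1) E)) (B (nabla (\<Phi> |` N2) E)))"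
    by (simp add: models_nabla p1 p2)
qed

lemma ESF_postulates: "ESF_postulates B nabla"
  unfolding ESF_postulates_def
  using ESF1 ESF2 ESF3 ESF4 ESF5 ESF6 ESF7 ESF8W by blast

end

section \<open>The postulates yield a representation\<close>

locale ESF_operator =
  fixes B :: "'e \<Rightarrow> 'v::finite fm"
    and nabla :: "('a::linorder \<rightharpoonup> 'e) \<Rightarrow> 'e \<Rightarrow> 'e"
  assumes epistemic: "epistemic_space B"
    and postulates: "ESF_postulates B nabla"
begin

lemma ESF1: "profile \<Phi> \<Longrightarrow> entails (B (nabla \<Phi> E)) (B E)"
  using postulates by (simp add: ESF_postulates_def)

lemma ESF2:
  "profile \<Phi> \<Longrightarrow> profile \<Phi>' \<Longrightarrow> prof_equiv \<Phi> \<Phi>' \<Longrightarrow> fequiv (B E) (B E') \<Longrightarrow>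
    fequiv (B (nabla \<Phi> E)) (B (nabla \<Phi>' E'))"
  using postulates by (simp add: ESF_postulates_def)

lemma ESF3:
  "profile \<Phi> \<Longrightarrow> fequiv (B E) (Conj (B E') (B E'')) \<Longrightarrow>
    entails (Conj (B (nabla \<Phi> E')) (B E'')) (B (nabla \<Phi> E))"
  using postulates by (simp add: ESF_postulates_def)

lemma ESF4:
  "profile \<Phi> \<Longrightarrow> fequiv (B E) (Conj (B E') (B E'')) \<Longrightarrow>
    consistent (Conj (B (nabla \<Phi> E')) (B E'')) \<Longrightarrow>
    entails (B (nabla \<Phi> E)) (Conj (B (nabla \<Phi> E')) (B E''))"
  using postulates by (simp add: ESF_postulates_def)

lemma ESF5: "Ej \<noteq> Ek \<Longrightarrow> \<exists>E'. \<not> fequiv (B (nabla [j \<mapsto> Ej] E')) (B (nabla [k \<mapsto> Ek] E'))"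
  using postulates by (simp add: ESF_postulates_def)

lemma ESF6:
  "profile \<Phi> \<Longrightarrow> consistent (Conj (BigConj B \<Phi>) (B E)) \<Longrightarrow>
    fequiv (B (nabla \<Phi> E)) (Conj (BigConj B \<Phi>) (B E))"
  using postulates by (simp add: ESF_postulates_def)

lemma ESF7:
  "profile \<Phi> \<Longrightarrow> partition2 \<Phi> N1 N2 \<Longrightarrow>
    entails (Conj (B (nabla (\<Phi> |` N1) E)) (B (nabla (\<Phi> |` N2) E))) (B (nabla \<Phi> E))"
  using postulates by (simp add: ESF_postulates_def)

lemma ESF8W:
  "profile \<Phi> \<Longrightarrow> partition2 \<Phi> N1 N2 \<Longrightarrow>
    consistent (Conj (B (nabla (\<Phi> |` N1) E)) (B (nabla (\<Phi> |` N2) E))) \<Longrightarrow>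
    entails (B (nabla \<Phi> E)) (Disj (B (nabla (\<Phi> |` N1) E)) (B (nabla (\<Phi> |` N2) E)))"
  using postulates by (simp add: ESF_postulates_def)

definition choice :: "('a \<rightharpoonup> 'e) \<Rightarrow> 'v set set \<Rightarrow> 'v set set" where
  "choice \<Phi> S = models (B (nabla \<Phi> (state_of B S)))"

definition pref :: "('a \<rightharpoonup> 'e) \<Rightarrow> 'v set \<Rightarrow> 'v set \<Rightarrow> bool" where
  "pref \<Phi> = revealed_pref (choice \<Phi>)"

lemma models_state_of_nonempty: "S \<noteq> {} \<Longrightarrow> models (B (state_of B S)) = S"
  by (rule models_state_of[OF epistemic])

lemma models_nabla_eq_choice: "profile \<Phi> \<Longrightarrow> models (B (nabla \<Phi> E)) = choice \<Phi> (models (B E))"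
  using ESF2[of \<Phi> \<Phi> E "state_of B (models (B E))"]
    models_state_of_nonempty[OF models_nonempty[OF epistemic]]
  by (simp add: prof_equiv_def fequiv_def choice_def)

lemma choice_function_choice:
  assumes "profile \<Phi>"
  shows "choice_function (choice \<Phi>)"
proof
  fix S T :: "'v set set"
  show "S \<noteq> {} \<Longrightarrow> choice \<Phi> S \<subseteq> S"
    using ESF1[OF assms] models_state_of_nonempty by (metis choice_def entails_def)
  show "choice \<Phi> S \<noteq> {}"
    unfolding choice_def by (rule models_nonempty[OF epistemic])
  assume "S \<subseteq> T" and "S \<noteq> {}"
  moreover from this have "T \<noteq> {}" by blast
  ultimately have "fequiv (B (state_of B S)) (Conj (B (state_of B T)) (B (state_of B S)))"
    by (auto simp: fequiv_def models_state_of_nonempty)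
  from ESF3[OF assms this] ESF4[OF assms this]
  show "choice \<Phi> T \<inter> S \<subseteq> choice \<Phi> S"
    and "choice \<Phi> T \<inter> S \<noteq> {} \<Longrightarrow> choice \<Phi> S \<subseteq> choice \<Phi> T \<inter> S"
    using \<open>S \<noteq> {}\<close>
    by (simp_all add: choice_def entails_def consistent_iff_models_nonempty models_state_of_nonempty)
qed

lemma pref_total_preorder: "profile \<Phi> \<Longrightarrow> total_preorder (pref \<Phi>)"
  unfolding pref_def
  by (rule choice_function.revealed_pref_total_preorder[OF choice_function_choice])

lemma represents_pref: "represents B nabla pref"
  unfolding represents_def pref_def
  using models_nabla_eq_choice choice_function.choice_eq_maxset[OF choice_function_choice]
    models_nonempty[OF epistemic] by simp

lemma pref_distinguishes_singletons:
  assumes "Ej \<noteq> Ek"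
  shows "pref [j \<mapsto> Ej] \<noteq> pref [k \<mapsto> Ek]"
proof
  assume eq: "pref [j \<mapsto> Ej] = pref [k \<mapsto> Ek]"
  obtain E where E: "\<not> fequiv (B (nabla [j \<mapsto> Ej] E)) (B (nabla [k \<mapsto> Ek] E))"
    using ESF5[OF assms] by blast
  have "models (B (nabla [i \<mapsto> e] E)) = maxset (models (B E)) (pref [i \<mapsto> e])" for i e
    using represents_pref profile_singleton[of i e] by (simp add: represents_def)
  with eq E show False by (simp add: fequiv_def)
qed

lemma maxset_pref_eq_BigConj:
  assumes "profile \<Phi>" and "consistent (BigConj B \<Phi>)"
  shows "models (BigConj B \<Phi>) = maxset UNIV (pref \<Phi>)"
proof -
  have top: "models (B (state_of B UNIV)) = UNIV" by (simp add: models_state_of_nonempty)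
  with assms have "fequiv (B (nabla \<Phi> (state_of B UNIV))) (Conj (BigConj B \<Phi>) (B (state_of B UNIV)))"
    by (intro ESF6) (simp_all add: consistent_iff_models_nonempty)
  with top show ?thesis
    using represents_pref assms(1) by (simp add: fequiv_def represents_def)
qed

lemma strict_pref_partition2:
  assumes p: "profile \<Phi>" and pt: "partition2 \<Phi> N1 N2"
    and s1: "strict (pref (\<Phi> |` N1)) w w'" and s2: "strict (pref (\<Phi> |` N2)) w w'"
  shows "strict (pref \<Phi>) w w'"
proof -
  let ?E = "state_of B {w, w'}"
  have p1: "profile (\<Phi> |` N1)" and p2: "profile (\<Phi> |` N2)"
    using profile_restrict_partition2[OF p pt] by auto
  have "choice (\<Phi> |` N1) {w, w'} = {w}" "choice (\<Phi> |` N2) {w, w'} = {w}" "w \<noteq> w'"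
    using s1 s2 choice_function.strict_revealed_pref_iff[OF choice_function_choice] p1 p2
    by (auto simp: pref_def)
  moreover from this have "choice \<Phi> {w, w'} \<subseteq> {w}"
    using ESF8W[OF p pt, of ?E] unfolding choice_def
    by (simp add: consistent_iff_models_nonempty entails_def)
  ultimately show ?thesis
    using choice_function.strict_revealed_pref_iff[OF choice_function_choice[OF p]]
      choice_function.choice_nonempty[OF choice_function_choice[OF p], of "{w, w'}"]
    by (auto simp: pref_def)
qed

lemma quasifaithful_pref: "quasifaithful B pref"
  unfolding quasifaithful_def basic_assignment_def assignment_def
proof (intro conjI allI impI)
  fix \<Phi> \<Psi> :: "'a \<rightharpoonup> 'e" assume "profile \<Phi>" "profile \<Psi>" "prof_equiv \<Phi> \<Psi>"
  then have "choice \<Phi> = choice \<Psi>"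
    using ESF2 by (auto simp: fequiv_def choice_def)
  then show "pref \<Phi> = pref \<Psi>" by (simp add: pref_def)
next
  fix \<Phi> :: "'a \<rightharpoonup> 'e" and N1 N2 w w'
  assume "profile \<Phi>" "partition2 \<Phi> N1 N2" "pref (\<Phi> |` N1) w w'" "pref (\<Phi> |` N2) w w'"
  then show "pref \<Phi> w w'"
    using ESF7[of \<Phi> N1 N2 "state_of B {w, w'}"]
    by (auto simp: pref_def revealed_pref_def choice_def entails_def)
qed (simp_all add: pref_total_preorder pref_distinguishes_singletons maxset_pref_eq_BigConj
       strict_pref_partition2)

lemma represented_by_pref_only:
  assumes "assignment R" and "represents B nabla R" and "profile \<Phi>"
  shows "R \<Phi> = pref \<Phi>"
proof (intro ext)
  fix w w'
  have "choice \<Phi> {w, w'} = maxset {w, w'} (R \<Phi>)"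
    using assms(2,3) models_state_of_nonempty[of "{w, w'}"]
    by (simp add: represents_def choice_def)
  moreover have "total_preorder (R \<Phi>)" using assms(1,3) by (simp add: assignment_def)
  ultimately show "R \<Phi> w w' = pref \<Phi> w w'"
    using maxset_pair_iff[of "R \<Phi>" w w'] by (simp add: pref_def revealed_pref_def)
qed

end

theorem theorem3:
  fixes B :: "'e \<Rightarrow> 'v::finite fm"
    and nabla :: "('a::wellorder \<rightharpoonup> 'e) \<Rightarrow> 'e \<Rightarrow> 'e"
  assumes "epistemic_space B"
  shows "ESF_postulates B nabla \<longleftrightarrow>
    (\<exists>R. quasifaithful B R \<and> represents B nabla R \<and>
      (\<forall>R'. quasifaithful B R' \<and> represents B nabla R' \<longrightarrow>
         (\<forall>\<Phi>. profile \<Phi> \<longrightarrow> R' \<Phi> = R \<Phi>)))"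
proof
  assume "ESF_postulates B nabla"
  then interpret ESF_operator B nabla
    using assms by unfold_locales
  show "\<exists>R. quasifaithful B R \<and> represents B nabla R \<and>
      (\<forall>R'. quasifaithful B R' \<and> represents B nabla R' \<longrightarrow>
         (\<forall>\<Phi>. profile \<Phi> \<longrightarrow> R' \<Phi> = R \<Phi>))"
  proof (intro exI conjI allI impI)
    fix R' and \<Phi> :: "'a \<rightharpoonup> 'e"
    assume "quasifaithful B R' \<and> represents B nabla R'" and "profile \<Phi>"
    then show "R' \<Phi> = pref \<Phi>"
      using represented_by_pref_only by (simp add: quasifaithful_def basic_assignment_def)
  qed (rule quasifaithful_pref represents_pref)+
next
  assume "\<exists>R. quasifaithful B R \<and> represents B nabla R \<and>
      (\<forall>R'. quasifaithful B R' \<and> represents B nabla R' \<longrightarrow>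
         (\<forall>\<Phi>. profile \<Phi> \<longrightarrow> R' \<Phi> = R \<Phi>))"
  then obtain R where "quasifaithful B R" "represents B nabla R" by blast
  then interpret represented_operator B nabla R
    using assms by unfold_locales
  show "ESF_postulates B nabla" by (rule ESF_postulates)
qed

end
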